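(* Let $K$ be a number field, let $\alpha,\beta$ be multiplicatively independent positive rational numbers, and let $N$ be a natural number. Let $F\in K[[x^{\mathbb{R}}]]$ be a Hahn series satisfying nontrivial homogeneous equations $\sum_{i=0}^{d_1}P_i(x)F(x^{\alpha^i})=0$ and $\sum_{i=0}^{d_2}Q_i(x)F(x^{\beta^i})=0$ with $P_i,Q_i\in K[x]$, $P_{d_1}\ne0$, $Q_{d_2}\ne0$. Then there is a positive integer $l$ such that $G(x)=F(x^l)$ satisfies $$P(G)\subseteq\bigcap_{|n|,|m|\le N}\mathbb{Z}\big[\alpha^n\beta^m,(\alpha^n\beta^m)^{-1}\big],$$ the intersection being over all integers $n,m$ with $|n|\le N$, $|m|\le N$.
   Context: $K[[x^{\mathbb{R}}]]$ is the field of Hahn series $\sum_{i\in\mathbb{R}} f_ix^i$ ($f_i\in K$) with well-ordered support $P(F)=\{i:f_i\ne0\}$; $F(x^\gamma)=\sum_if_ix^{\gamma i}$. For a positive rational $\gamma$, $\mathbb{Z}[\gamma,\gamma^{-1}]$ is the subring of $\mathbb{Q}$ generated by $\gamma$ and $\gamma^{-1}$. Positive reals $\alpha,\beta$ are multiplicatively independent if $\log\alpha/\log\beta\notin\mathbb{Q}$. *)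

theory Defs
  imports Complex_Main "HOL-Computational_Algebra.Polynomial"
begin

text \<open>A number field, viewed (via an embedding) as a subfield K of the complex numbers
  that is finite-dimensional as a vector space over the rationals.\<close>
definition number_field :: "complex set \<Rightarrow> bool" where
  "number_field K \<longleftrightarrow>
     0 \<in> K \<and> 1 \<in> K \<and>
     (\<forall>x\<in>K. \<forall>y\<in>K. x + y \<in> K \<and> x - y \<in> K \<and> x * y \<in> K) \<and>
     (\<forall>x\<in>K. x \<noteq> 0 \<longrightarrow> inverse x \<in> K) \<and>
     (\<exists>B. finite B \<and> B \<subseteq> K \<and>
        (\<forall>x\<in>K. \<exists>c. (\<forall>b\<in>B. c b \<in> \<rat>) \<and> x = (\<Sum>b\<in>B. c b * b)))"

text \<open>A Hahn series in K[[x^R]] is represented by its coefficient function f,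
  F = sum_i f i x^i; its support P(F) = {i. f i \<noteq> 0} must be well-ordered.\<close>
definition hahn_support :: "(real \<Rightarrow> complex) \<Rightarrow> real set" where
  "hahn_support f = {i. f i \<noteq> 0}"

definition hahn_series :: "complex set \<Rightarrow> (real \<Rightarrow> complex) \<Rightarrow> bool" where
  "hahn_series K f \<longleftrightarrow> (\<forall>i. f i \<in> K) \<and>
     (\<forall>S. S \<subseteq> hahn_support f \<and> S \<noteq> {} \<longrightarrow> (\<exists>m\<in>S. \<forall>x\<in>S. m \<le> x))"

text \<open>F(x^\<gamma>) = sum_i f i x^(\<gamma> i): coefficient at j is f (j/\<gamma>).\<close>
definition hahn_subst_pow :: "(real \<Rightarrow> complex) \<Rightarrow> real \<Rightarrow> (real \<Rightarrow> complex)" where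
  "hahn_subst_pow f \<gamma> = (\<lambda>j. f (j / \<gamma>))"

definition poly_hahn_mult :: "complex poly \<Rightarrow> (real \<Rightarrow> complex) \<Rightarrow> (real \<Rightarrow> complex)" where
  "poly_hahn_mult p f = (\<lambda>j. \<Sum>k\<le>degree p. coeff p k * f (j - real k))"

definition mahler_eq :: "(nat \<Rightarrow> complex poly) \<Rightarrow> nat \<Rightarrow> real \<Rightarrow> (real \<Rightarrow> complex) \<Rightarrow> bool" where
  "mahler_eq P d \<gamma> f \<longleftrightarrow>
     (\<forall>j. (\<Sum>i\<le>d. poly_hahn_mult (P i) (hahn_subst_pow f (\<gamma> ^ i)) j) = 0)"

definition poly_over :: "complex set \<Rightarrow> complex poly \<Rightarrow> bool" where
  "poly_over K p \<longleftrightarrow> (\<forall>k. coeff p k \<in> K)"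

definition Zring_gen :: "real \<Rightarrow> real set" where
  "Zring_gen \<gamma> = \<Inter>{S. 1 \<in> S \<and> \<gamma> \<in> S \<and> inverse \<gamma> \<in> S \<and>
       (\<forall>x\<in>S. \<forall>y\<in>S. x + y \<in> S \<and> x - y \<in> S \<and> x * y \<in> S)}"

definition mult_indep :: "real \<Rightarrow> real \<Rightarrow> bool" where
  "mult_indep a b \<longleftrightarrow> ln a / ln b \<notin> \<rat>"

end

theory Submission
  imports Defs "HOL-Library.Poly_Mapping"
begin

text \<open>
  Suppose \<Sum>_k e_k(x) F(x^\<gamma>_k) = 0 with finitely many distinct \<gamma>_k > 0 and generalised
  polynomials e_k (finite sums of monomials x^s with real s), not all zero. Let Y be closed
  under addition and under multiplication by the ratios \<gamma>_k'/\<gamma>_k, and let \<mu> be the least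
  exponent of F outside Y. The candidate lowest exponent min_k (ord e_k + \<gamma>_k \<mu>) of the
  relation receives no other contribution: one coming from an exponent u of F in Y would force
  \<mu> into Y, and one from u \<notin> Y has u \<ge> \<mu>. So it cancels only if the minimum is attained
  twice, which makes \<mu> a quotient (s' - s)/(\<gamma>_k - \<gamma>_k') of exponents of the e_k. Hence if Y
  contains these quotients and the (s' - s)/\<gamma>_k, the support of F lies in Y.

  For \<alpha> = a/b the \<alpha>-equation alone gives this for Y = {u. u L (ab)^k \<in> \<int> for some k}: only
  primes of ab occur in the denominators of the exponents. For each such prime p, independence
  of \<alpha> and \<beta> yields a p-adic unit \<delta> = \<alpha>^x \<beta>^y \<noteq> 1. Up to nonzero factors, the two equations
  put every F(x^(\<alpha>^i \<beta>^j)) into the module spanned by the d1 d2 series with i < d1, j < d2,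
  so any d1 d2 + 1 of the series F(x^(C \<delta>^k)) satisfy a relation as above, and
  Y = {u. v_p(u) \<ge> -n} bounds the p-part of the denominators. Therefore F(x^l) has integer
  exponents for some l > 0, and \<int> lies in every ring \<int>[\<gamma>, \<gamma>^-1].
\<close>

section \<open>Generalised polynomials acting on Hahn series\<close>

type_synonym gpoly = "real \<Rightarrow>\<^sub>0 complex" \<comment> \<open>\<open>c\<close> stands for \<Sum>_s c(s) x^s\<close>

definition gpoly_hahn_mult :: "gpoly \<Rightarrow> (real \<Rightarrow> complex) \<Rightarrow> (real \<Rightarrow> complex)" where
  "gpoly_hahn_mult c f = (\<lambda>j. \<Sum>s\<in>Poly_Mapping.keys c. Poly_Mapping.lookup c s * f (j - s))"

lemma gpoly_hahn_mult_superset: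
  assumes "finite T" "Poly_Mapping.keys c \<subseteq> T"
  shows "gpoly_hahn_mult c f j = (\<Sum>s\<in>T. Poly_Mapping.lookup c s * f (j - s))"
  unfolding gpoly_hahn_mult_def
  by (rule sum.mono_neutral_left) (use assms in \<open>auto simp: in_keys_iff\<close>)

lemma gpoly_hahn_mult_add_left:
  "gpoly_hahn_mult (c1 + c2) f j = gpoly_hahn_mult c1 f j + gpoly_hahn_mult c2 f j"
proof -
  let ?T = "Poly_Mapping.keys c1 \<union> Poly_Mapping.keys c2"
  have "gpoly_hahn_mult (c1 + c2) f j =
      (\<Sum>s\<in>?T. Poly_Mapping.lookup (c1 + c2) s * f (j - s))"
    by (rule gpoly_hahn_mult_superset) (use keys_add[of c1 c2] in auto)
  also have "\<dots> = (\<Sum>s\<in>?T. Poly_Mapping.lookup c1 s * f (j - s)) +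
      (\<Sum>s\<in>?T. Poly_Mapping.lookup c2 s * f (j - s))"
    by (simp add: lookup_add algebra_simps sum.distrib)
  also have "\<dots> = gpoly_hahn_mult c1 f j + gpoly_hahn_mult c2 f j"
    by (subst (1 2) gpoly_hahn_mult_superset[of ?T]) auto
  finally show ?thesis .
qed

lemma gpoly_hahn_mult_zero_left [simp]: "gpoly_hahn_mult 0 f j = 0"
  by (simp add: gpoly_hahn_mult_def)

lemma gpoly_hahn_mult_sum_left:
  "finite A \<Longrightarrow> gpoly_hahn_mult (\<Sum>i\<in>A. c i) f j = (\<Sum>i\<in>A. gpoly_hahn_mult (c i) f j)"
  by (induction A rule: finite_induct) (auto simp: gpoly_hahn_mult_add_left)

lemma gpoly_hahn_mult_uminus_left:
  "gpoly_hahn_mult (- c) f j = - gpoly_hahn_mult c f j"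
  using gpoly_hahn_mult_add_left[of c "- c" f j] by (simp add: eq_neg_iff_add_eq_0 add.commute)

lemma gpoly_hahn_mult_single:
  "gpoly_hahn_mult (Poly_Mapping.single s a) f j = a * f (j - s)"
  by (cases "a = 0") (auto simp: gpoly_hahn_mult_def)

lemma gpoly_hahn_mult_one [simp]: "gpoly_hahn_mult 1 f = f"
  by (rule ext) (metis gpoly_hahn_mult_single diff_zero mult_1 single_one)

lemma sum_single_lookup:
  fixes c :: "'a \<Rightarrow>\<^sub>0 'b::comm_monoid_add"
  shows "(\<Sum>s\<in>Poly_Mapping.keys c. Poly_Mapping.single s (Poly_Mapping.lookup c s)) = c"
proof (rule poly_mapping_eqI)
  fix k
  have "Poly_Mapping.lookup
      (\<Sum>s\<in>Poly_Mapping.keys c. Poly_Mapping.single s (Poly_Mapping.lookup c s)) k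
      = (\<Sum>s\<in>Poly_Mapping.keys c. (if s = k then Poly_Mapping.lookup c s else 0))"
    by (simp add: lookup_sum lookup_single when_def)
  also have "\<dots> = Poly_Mapping.lookup c k"
    by (simp add: in_keys_iff)
  finally show "Poly_Mapping.lookup (\<Sum>s\<in>Poly_Mapping.keys c.
      Poly_Mapping.single s (Poly_Mapping.lookup c s)) k = Poly_Mapping.lookup c k" .
qed

lemma gpoly_hahn_mult_mult:
  "gpoly_hahn_mult (c1 * c2) f = gpoly_hahn_mult c1 (gpoly_hahn_mult c2 f)"
proof
  fix j
  let ?K1 = "Poly_Mapping.keys c1" and ?K2 = "Poly_Mapping.keys c2"
  have "c1 * c2 = (\<Sum>s\<in>?K1. Poly_Mapping.single s (Poly_Mapping.lookup c1 s)) *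
      (\<Sum>t\<in>?K2. Poly_Mapping.single t (Poly_Mapping.lookup c2 t))"
    by (simp only: sum_single_lookup)
  also have "\<dots> = (\<Sum>s\<in>?K1. \<Sum>t\<in>?K2.
      Poly_Mapping.single (s + t) (Poly_Mapping.lookup c1 s * Poly_Mapping.lookup c2 t))"
    by (simp add: sum_distrib_left sum_distrib_right mult_single sum.swap[of _ ?K2])
  finally have "gpoly_hahn_mult (c1 * c2) f j = (\<Sum>s\<in>?K1. \<Sum>t\<in>?K2.
      Poly_Mapping.lookup c1 s * Poly_Mapping.lookup c2 t * f (j - (s + t)))"
    by (simp add: gpoly_hahn_mult_sum_left gpoly_hahn_mult_single)
  also have "\<dots> = gpoly_hahn_mult c1 (gpoly_hahn_mult c2 f) j"
    by (simp add: gpoly_hahn_mult_def sum_distrib_left algebra_simps)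
  finally show "gpoly_hahn_mult (c1 * c2) f j = gpoly_hahn_mult c1 (gpoly_hahn_mult c2 f) j" .
qed

lemma gpoly_hahn_mult_commute:
  "gpoly_hahn_mult c1 (gpoly_hahn_mult c2 f) = gpoly_hahn_mult c2 (gpoly_hahn_mult c1 f)"
  by (metis gpoly_hahn_mult_mult mult.commute)

lemma gpoly_hahn_mult_add_right:
  "gpoly_hahn_mult c (\<lambda>j. f j + g j) = (\<lambda>j. gpoly_hahn_mult c f j + gpoly_hahn_mult c g j)"
  unfolding gpoly_hahn_mult_def by (simp add: distrib_left sum.distrib)

lemma gpoly_hahn_mult_sum_right:
  "finite L \<Longrightarrow>
    gpoly_hahn_mult c (\<lambda>j. \<Sum>l\<in>L. g l j) j = (\<Sum>l\<in>L. gpoly_hahn_mult c (g l) j)"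
  unfolding gpoly_hahn_mult_def by (simp add: sum_distrib_left) (rule sum.swap)

definition gpoly_ord :: "gpoly \<Rightarrow> real" where
  "gpoly_ord c = Min (Poly_Mapping.keys c)"

lemma gpoly_ord_in_keys: "c \<noteq> 0 \<Longrightarrow> gpoly_ord c \<in> Poly_Mapping.keys c"
  unfolding gpoly_ord_def by (intro Min_in) auto

lemma gpoly_ord_le: "s \<in> Poly_Mapping.keys c \<Longrightarrow> gpoly_ord c \<le> s"
  unfolding gpoly_ord_def by (intro Min_le) auto

definition gpoly_of_poly :: "complex poly \<Rightarrow> gpoly" where
  "gpoly_of_poly p = (\<Sum>k\<le>degree p. Poly_Mapping.single (real k) (coeff p k))"

lemma gpoly_hahn_mult_of_poly: "gpoly_hahn_mult (gpoly_of_poly p) f = poly_hahn_mult p f"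
  by (rule ext) (simp add: gpoly_of_poly_def gpoly_hahn_mult_sum_left gpoly_hahn_mult_single
      poly_hahn_mult_def)

lemma lookup_gpoly_of_poly: "Poly_Mapping.lookup (gpoly_of_poly p) (real k) = coeff p k"
proof -
  have "Poly_Mapping.lookup (gpoly_of_poly p) (real k) =
      (\<Sum>k'\<le>degree p. (if k' = k then coeff p k' else 0))"
    unfolding gpoly_of_poly_def lookup_sum
    by (intro sum.cong) (auto simp: lookup_single when_def)
  also have "\<dots> = coeff p k"
    by (auto simp: coeff_eq_0)
  finally show ?thesis .
qed

lemma gpoly_of_poly_eq_0_iff [simp]: "gpoly_of_poly p = 0 \<longleftrightarrow> p = 0"
proof
  show "gpoly_of_poly p = 0 \<Longrightarrow> p = 0"
    by (metis lookup_gpoly_of_poly lookup_zero leading_coeff_0_iff)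
qed (simp add: gpoly_of_poly_def)

lemma keys_gpoly_of_poly: "Poly_Mapping.keys (gpoly_of_poly p) \<subseteq> \<nat>"
  unfolding gpoly_of_poly_def
  by (rule order.trans[OF keys_sum]) (auto simp: of_nat_in_Nats)

definition gpoly_scale :: "real \<Rightarrow> gpoly \<Rightarrow> gpoly" where
  "gpoly_scale \<gamma> c = (\<Sum>s\<in>Poly_Mapping.keys c.
      Poly_Mapping.single (\<gamma> * s) (Poly_Mapping.lookup c s))"

lemma gpoly_hahn_mult_scale:
  assumes "\<gamma> \<noteq> 0"
  shows "gpoly_hahn_mult (gpoly_scale \<gamma> c) (hahn_subst_pow f \<gamma>) j = gpoly_hahn_mult c f (j / \<gamma>)"
proof -
  have "gpoly_hahn_mult (gpoly_scale \<gamma> c) (hahn_subst_pow f \<gamma>) j =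
      (\<Sum>s\<in>Poly_Mapping.keys c. Poly_Mapping.lookup c s * f ((j - \<gamma> * s) / \<gamma>))"
    by (simp add: gpoly_scale_def gpoly_hahn_mult_sum_left gpoly_hahn_mult_single
        hahn_subst_pow_def)
  also have "\<dots> = gpoly_hahn_mult c f (j / \<gamma>)"
    unfolding gpoly_hahn_mult_def using assms by (intro sum.cong) (auto simp: field_simps)
  finally show ?thesis .
qed

lemma lookup_gpoly_scale:
  assumes "\<gamma> \<noteq> 0"
  shows "Poly_Mapping.lookup (gpoly_scale \<gamma> c) (\<gamma> * t) = Poly_Mapping.lookup c t"
proof -
  have "Poly_Mapping.lookup (gpoly_scale \<gamma> c) (\<gamma> * t) =
      (\<Sum>s\<in>Poly_Mapping.keys c. (if s = t then Poly_Mapping.lookup c s else 0))"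
    unfolding gpoly_scale_def lookup_sum using assms
    by (intro sum.cong) (auto simp: lookup_single when_def)
  also have "\<dots> = Poly_Mapping.lookup c t"
    by (simp add: in_keys_iff)
  finally show ?thesis .
qed

lemma gpoly_scale_eq_0_iff [simp]:
  assumes "\<gamma> \<noteq> 0"
  shows "gpoly_scale \<gamma> c = 0 \<longleftrightarrow> c = 0"
proof
  show "gpoly_scale \<gamma> c = 0 \<Longrightarrow> c = 0"
    by (metis assms lookup_gpoly_scale lookup_zero poly_mapping_eqI)
qed (simp add: gpoly_scale_def)

lemma keys_gpoly_scale:
  "Poly_Mapping.keys (gpoly_scale \<gamma> c) \<subseteq> (\<lambda>s. \<gamma> * s) ` Poly_Mapping.keys c"
  unfolding gpoly_scale_def by (rule order.trans[OF keys_sum]) auto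

lemma hahn_subst_pow_hahn_subst_pow:
  "hahn_subst_pow (hahn_subst_pow f a) b = hahn_subst_pow f (a * b)"
  by (rule ext) (simp add: hahn_subst_pow_def mult.commute)

definition rat_gpolys :: "gpoly set" where
  "rat_gpolys = {c. Poly_Mapping.keys c \<subseteq> \<rat>}"

lemma zero_in_rat_gpolys [simp]: "0 \<in> rat_gpolys"
  and one_in_rat_gpolys [simp]: "1 \<in> rat_gpolys"
  by (auto simp: rat_gpolys_def)

lemma rat_gpolys_add: "a \<in> rat_gpolys \<Longrightarrow> b \<in> rat_gpolys \<Longrightarrow> a + b \<in> rat_gpolys"
  using keys_add[of a b] by (auto simp: rat_gpolys_def)

lemma rat_gpolys_uminus: "a \<in> rat_gpolys \<Longrightarrow> - a \<in> rat_gpolys"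
  by (auto simp: rat_gpolys_def)

lemma rat_gpolys_diff: "a \<in> rat_gpolys \<Longrightarrow> b \<in> rat_gpolys \<Longrightarrow> a - b \<in> rat_gpolys"
  using keys_diff[of a b] by (auto simp: rat_gpolys_def)

lemma rat_gpolys_mult: "a \<in> rat_gpolys \<Longrightarrow> b \<in> rat_gpolys \<Longrightarrow> a * b \<in> rat_gpolys"
  using keys_mult[of a b] by (force simp: rat_gpolys_def)

lemma gpoly_of_poly_in_rat_gpolys: "gpoly_of_poly p \<in> rat_gpolys"
  using keys_gpoly_of_poly[of p] Nats_subset_Rats by (auto simp: rat_gpolys_def)

lemma gpoly_scale_in_rat_gpolys: "\<gamma> \<in> \<rat> \<Longrightarrow> c \<in> rat_gpolys \<Longrightarrow> gpoly_scale \<gamma> c \<in> rat_gpolys"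
  using keys_gpoly_scale[of \<gamma> c] unfolding rat_gpolys_def by (blast intro: Rats_mult)

section \<open>Linear relations in the saturated span\<close>

lemma sum_elimination_eq:
  fixes v :: "'i \<Rightarrow> 'l \<Rightarrow> 'a::comm_ring"
  assumes "finite I" "k0 \<in> I"
  shows "(\<Sum>k\<in>I. (if k = k0 then - (\<Sum>k'\<in>I - {k0}. c k' * v k' l0) else c k * v k0 l0) * v k l) =
    (\<Sum>k\<in>I - {k0}. c k * (v k0 l0 * v k l - v k l0 * v k0 l))"
proof -
  have "(\<Sum>k\<in>I. (if k = k0 then - (\<Sum>k'\<in>I - {k0}. c k' * v k' l0) else c k * v k0 l0) * v k l) =
      - (\<Sum>k\<in>I - {k0}. c k * v k l0 * v k0 l) + (\<Sum>k\<in>I - {k0}. c k * v k0 l0 * v k l)"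
    using assms by (simp add: sum.remove sum_distrib_right)
  then show ?thesis
    by (simp add: right_diff_distrib sum_subtractf algebra_simps)
qed

lemma exists_nontrivial_linear_relation:
  fixes v :: "'i \<Rightarrow> 'l \<Rightarrow> 'a::idom" and A :: "'a set"
  assumes A: "0 \<in> A" "1 \<in> A" "\<And>x y. x \<in> A \<Longrightarrow> y \<in> A \<Longrightarrow> x - y \<in> A"
      "\<And>x y. x \<in> A \<Longrightarrow> y \<in> A \<Longrightarrow> x * y \<in> A"
    and "finite G" "finite I" "card G < card I" "\<forall>k\<in>I. \<forall>l\<in>G. v k l \<in> A"
  shows "\<exists>c. (\<forall>k\<in>I. c k \<in> A) \<and> (\<exists>k\<in>I. c k \<noteq> 0) \<and> (\<forall>l\<in>G. (\<Sum>k\<in>I. c k * v k l) = 0)"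
  using assms(5-8)
proof (induction G arbitrary: I v rule: finite_induct)
  case empty
  then obtain k0 where "k0 \<in> I" by fastforce
  then show ?case using A by (intro exI[of _ "\<lambda>k. if k = k0 then 1 else 0"]) auto
next
  case (insert l0 G)
  have A_uminus: "- x \<in> A" if "x \<in> A" for x
    using A(3)[OF A(1) that] by simp
  have A_sum: "(\<Sum>i\<in>S. b i) \<in> A" if "\<And>i. i \<in> S \<Longrightarrow> b i \<in> A" for S :: "'i set" and b
    using that A(3)[OF _ A_uminus]
    by (induction S rule: infinite_finite_induct) (auto intro: A(1))
  show ?case
  proof (cases "\<forall>k\<in>I. v k l0 = 0")
    case True
    have "card G < card I" using insert.hyps insert.prems(2) by simp
    then obtain c where "\<forall>k\<in>I. c k \<in> A" "\<exists>k\<in>I. c k \<noteq> 0"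
        "\<forall>l\<in>G. (\<Sum>k\<in>I. c k * v k l) = 0"
      using insert.IH[of I v] insert.prems(1,3) by auto
    then show ?thesis using True by (intro exI[of _ c]) auto
  next
    case False
    then obtain k0 where k0: "k0 \<in> I" "v k0 l0 \<noteq> 0" by blast
    define w where "w k l = v k0 l0 * v k l - v k l0 * v k0 l" for k l
    have "card G < card (I - {k0})"
      using insert.prems(2) insert.hyps k0(1) by simp
    moreover have "\<forall>k\<in>I - {k0}. \<forall>l\<in>G. w k l \<in> A"
      using insert.prems(3) k0(1) by (auto simp: w_def intro!: A)
    ultimately obtain c where c: "\<forall>k\<in>I - {k0}. c k \<in> A" "\<exists>k\<in>I - {k0}. c k \<noteq> 0"
        "\<forall>l\<in>G. (\<Sum>k\<in>I - {k0}. c k * w k l) = 0"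
      using insert.IH[of "I - {k0}" w] insert.prems(1) by auto
    define c' where
      "c' k = (if k = k0 then - (\<Sum>k'\<in>I - {k0}. c k' * v k' l0) else c k * v k0 l0)" for k
    show ?thesis
    proof (intro exI[of _ c'] conjI ballI)
      fix k assume "k \<in> I"
      then show "c' k \<in> A" using c(1) insert.prems(3) k0(1)
        by (auto simp: c'_def intro!: A(4) A_uminus A_sum)
    next
      show "\<exists>k\<in>I. c' k \<noteq> 0" using c(2) k0(2) by (auto simp: c'_def)
    next
      fix l assume "l \<in> insert l0 G"
      then show "(\<Sum>k\<in>I. c' k * v k l) = 0"
        using c(3) sum_elimination_eq[OF insert.prems(1) k0(1), of c v l0 l]
        by (auto simp: c'_def w_def mult.commute)
    qed
  qed
qed

definition gspan :: "'l set \<Rightarrow> ('l \<Rightarrow> real \<Rightarrow> complex) \<Rightarrow> (real \<Rightarrow> complex) set" where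
  "gspan G g = {v. \<exists>a. (\<forall>l\<in>G. a l \<in> rat_gpolys) \<and>
      v = (\<lambda>j. \<Sum>l\<in>G. gpoly_hahn_mult (a l) (g l) j)}"

definition saturated_gspan :: "'l set \<Rightarrow> ('l \<Rightarrow> real \<Rightarrow> complex) \<Rightarrow> (real \<Rightarrow> complex) set"
  where "saturated_gspan G g =
    {v. \<exists>c\<in>rat_gpolys. c \<noteq> 0 \<and> gpoly_hahn_mult c v \<in> gspan G g}"

lemma gspan_mult:
  assumes "finite G" "c \<in> rat_gpolys" "v \<in> gspan G g"
  shows "gpoly_hahn_mult c v \<in> gspan G g"
proof -
  obtain a where a: "\<forall>l\<in>G. a l \<in> rat_gpolys" "v = (\<lambda>j. \<Sum>l\<in>G. gpoly_hahn_mult (a l) (g l) j)"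
    using assms(3) unfolding gspan_def by blast
  have "gpoly_hahn_mult c v = (\<lambda>j. \<Sum>l\<in>G. gpoly_hahn_mult (c * a l) (g l) j)"
    by (rule ext) (simp add: a(2) gpoly_hahn_mult_sum_right[OF assms(1)] gpoly_hahn_mult_mult)
  then show ?thesis unfolding gspan_def using a(1) assms(2)
    by (intro CollectI exI[of _ "\<lambda>l. c * a l"]) (auto intro!: rat_gpolys_mult)
qed

lemma gspan_add:
  assumes "v \<in> gspan G g" "w \<in> gspan G g"
  shows "(\<lambda>j. v j + w j) \<in> gspan G g"
proof -
  obtain a where a: "\<forall>l\<in>G. a l \<in> rat_gpolys" "v = (\<lambda>j. \<Sum>l\<in>G. gpoly_hahn_mult (a l) (g l) j)"
    using assms(1) unfolding gspan_def by blast
  obtain b where b: "\<forall>l\<in>G. b l \<in> rat_gpolys" "w = (\<lambda>j. \<Sum>l\<in>G. gpoly_hahn_mult (b l) (g l) j)"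
    using assms(2) unfolding gspan_def by blast
  have "(\<lambda>j. v j + w j) = (\<lambda>j. \<Sum>l\<in>G. gpoly_hahn_mult (a l + b l) (g l) j)"
    by (simp add: a(2) b(2) gpoly_hahn_mult_add_left sum.distrib)
  then show ?thesis unfolding gspan_def using a(1) b(1)
    by (intro CollectI exI[of _ "\<lambda>l. a l + b l"]) (auto intro!: rat_gpolys_add)
qed

lemma saturated_gspan_add:
  assumes "finite G" "v \<in> saturated_gspan G g" "w \<in> saturated_gspan G g"
  shows "(\<lambda>j. v j + w j) \<in> saturated_gspan G g"
proof -
  obtain c1 where c1: "c1 \<in> rat_gpolys" "c1 \<noteq> 0" "gpoly_hahn_mult c1 v \<in> gspan G g"
    using assms(2) unfolding saturated_gspan_def by blast
  obtain c2 where c2: "c2 \<in> rat_gpolys" "c2 \<noteq> 0" "gpoly_hahn_mult c2 w \<in> gspan G g"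
    using assms(3) unfolding saturated_gspan_def by blast
  have "gpoly_hahn_mult (c1 * c2) (\<lambda>j. v j + w j) = (\<lambda>j.
      gpoly_hahn_mult c2 (gpoly_hahn_mult c1 v) j + gpoly_hahn_mult c1 (gpoly_hahn_mult c2 w) j)"
    by (simp add: gpoly_hahn_mult_add_right gpoly_hahn_mult_mult gpoly_hahn_mult_commute)
  also have "\<dots> \<in> gspan G g"
    by (intro gspan_add gspan_mult assms(1) c1 c2)
  finally show ?thesis unfolding saturated_gspan_def using c1 c2
    by (intro CollectI bexI[of _ "c1 * c2"]) (auto intro: rat_gpolys_mult)
qed

lemma saturated_gspan_mult:
  assumes "finite G" "c \<in> rat_gpolys" "v \<in> saturated_gspan G g"
  shows "gpoly_hahn_mult c v \<in> saturated_gspan G g"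
proof -
  obtain c' where c': "c' \<in> rat_gpolys" "c' \<noteq> 0" "gpoly_hahn_mult c' v \<in> gspan G g"
    using assms(3) unfolding saturated_gspan_def by blast
  have "gpoly_hahn_mult c (gpoly_hahn_mult c' v) \<in> gspan G g"
    by (intro gspan_mult assms c')
  then show ?thesis unfolding saturated_gspan_def using c'
    by (auto simp: gpoly_hahn_mult_commute)
qed

lemma saturated_gspan_sum:
  assumes "finite G" "finite A" "\<And>i. i \<in> A \<Longrightarrow> v i \<in> saturated_gspan G g"
  shows "(\<lambda>j. \<Sum>i\<in>A. v i j) \<in> saturated_gspan G g"
  using assms(2,3)
proof (induction A rule: finite_induct)
  case empty
  have "(\<lambda>j. 0) \<in> gspan G g"
    unfolding gspan_def by (auto intro!: exI[of _ "\<lambda>_. 0"])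
  then show ?case
    unfolding saturated_gspan_def by (intro CollectI bexI[of _ 1]) (auto simp: fun_eq_iff)
next
  case (insert x F)
  then show ?case
    using saturated_gspan_add[OF assms(1), of "v x" g "\<lambda>j. \<Sum>i\<in>F. v i j"] by simp
qed

lemma saturated_gspan_cancel:
  assumes "c \<in> rat_gpolys" "c \<noteq> 0" "gpoly_hahn_mult c v \<in> saturated_gspan G g"
  shows "v \<in> saturated_gspan G g"
proof -
  obtain c' where "c' \<in> rat_gpolys" "c' \<noteq> 0" "gpoly_hahn_mult c' (gpoly_hahn_mult c v) \<in> gspan G g"
    using assms(3) unfolding saturated_gspan_def by blast
  then show ?thesis unfolding saturated_gspan_def using assms(1,2)
    by (intro CollectI bexI[of _ "c' * c"]) (auto simp: gpoly_hahn_mult_mult intro: rat_gpolys_mult)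
qed

lemma generator_in_saturated_gspan:
  assumes "finite G" "l \<in> G"
  shows "g l \<in> saturated_gspan G g"
proof -
  have "g l = (\<lambda>j. \<Sum>l'\<in>G. gpoly_hahn_mult (if l' = l then 1 else 0) (g l') j)"
    using assms by (simp add: if_distrib[of "\<lambda>c. gpoly_hahn_mult c _ _"] cong: if_cong)
  then have "gpoly_hahn_mult 1 (g l) \<in> gspan G g"
    unfolding gspan_def by (intro CollectI exI[of _ "\<lambda>l'. if l' = l then 1 else 0"]) auto
  then show ?thesis unfolding saturated_gspan_def by (intro CollectI bexI[of _ 1]) auto
qed

lemma saturated_gspan_relation:
  assumes "finite G" "finite I" "card G < card I" "\<And>k. k \<in> I \<Longrightarrow> h k \<in> saturated_gspan G g"
  shows "\<exists>e. (\<forall>k\<in>I. e k \<in> rat_gpolys) \<and> (\<exists>k\<in>I. e k \<noteq> 0) \<and>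
    (\<forall>j. (\<Sum>k\<in>I. gpoly_hahn_mult (e k) (h k) j) = 0)"
proof -
  have "\<forall>k\<in>I. \<exists>c. c \<in> rat_gpolys \<and> c \<noteq> 0 \<and> gpoly_hahn_mult c (h k) \<in> gspan G g"
    using assms(4) unfolding saturated_gspan_def by blast
  from bchoice[OF this] obtain c where
    c: "\<forall>k\<in>I. c k \<in> rat_gpolys \<and> c k \<noteq> 0 \<and> gpoly_hahn_mult (c k) (h k) \<in> gspan G g"
    by blast
  then have "\<forall>k\<in>I. \<exists>a. (\<forall>l\<in>G. a l \<in> rat_gpolys) \<and>
      gpoly_hahn_mult (c k) (h k) = (\<lambda>j. \<Sum>l\<in>G. gpoly_hahn_mult (a l) (g l) j)"
    unfolding gspan_def by blast
  from bchoice[OF this] obtain a where a: "\<forall>k\<in>I. (\<forall>l\<in>G. a k l \<in> rat_gpolys) \<and>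
      gpoly_hahn_mult (c k) (h k) = (\<lambda>j. \<Sum>l\<in>G. gpoly_hahn_mult (a k l) (g l) j)"
    by blast
  obtain r where r: "\<forall>k\<in>I. r k \<in> rat_gpolys" "\<exists>k\<in>I. r k \<noteq> 0"
      "\<forall>l\<in>G. (\<Sum>k\<in>I. r k * a k l) = 0"
    using exists_nontrivial_linear_relation[of rat_gpolys G I a] assms(1-3) a
    by (auto intro: rat_gpolys_diff rat_gpolys_mult)
  have "(\<Sum>k\<in>I. gpoly_hahn_mult (r k * c k) (h k) j) = 0" for j
  proof -
    have "(\<Sum>k\<in>I. gpoly_hahn_mult (r k * c k) (h k) j) =
        (\<Sum>k\<in>I. \<Sum>l\<in>G. gpoly_hahn_mult (r k * a k l) (g l) j)"
      using a by (intro sum.cong)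
        (simp_all add: gpoly_hahn_mult_mult gpoly_hahn_mult_sum_right[OF assms(1)])
    also have "\<dots> = (\<Sum>l\<in>G. gpoly_hahn_mult (\<Sum>k\<in>I. r k * a k l) (g l) j)"
      by (simp add: sum.swap[of _ I] gpoly_hahn_mult_sum_left[OF assms(2)])
    finally show ?thesis using r(3) by simp
  qed
  then show ?thesis using r(1,2) c
    by (intro exI[of _ "\<lambda>k. r k * c k"]) (auto intro: rat_gpolys_mult)
qed

section \<open>Mahler equations and the saturated span\<close>

lemma mahler_eq_scaled:
  assumes "mahler_eq P d \<gamma> f" "\<rho> \<noteq> 0"
  shows "(\<Sum>i\<le>d. gpoly_hahn_mult (gpoly_scale \<rho> (gpoly_of_poly (P i)))
      (hahn_subst_pow f (\<gamma> ^ i * \<rho>)) j) = 0"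
proof -
  have "(\<Sum>i\<le>d. gpoly_hahn_mult (gpoly_scale \<rho> (gpoly_of_poly (P i)))
      (hahn_subst_pow f (\<gamma> ^ i * \<rho>)) j) =
      (\<Sum>i\<le>d. poly_hahn_mult (P i) (hahn_subst_pow f (\<gamma> ^ i)) (j / \<rho>))"
    by (intro sum.cong refl) (simp add: hahn_subst_pow_hahn_subst_pow[symmetric]
        gpoly_hahn_mult_scale assms(2) gpoly_hahn_mult_of_poly)
  also have "\<dots> = 0"
    using assms(1) by (simp add: mahler_eq_def)
  finally show ?thesis .
qed

lemma mahler_step_saturated_gspan:
  assumes "mahler_eq P d \<gamma> f" "P d \<noteq> 0" "\<rho> \<in> \<rat>" "\<rho> \<noteq> 0" "finite G"
    and "\<And>i. i < d \<Longrightarrow> hahn_subst_pow f (\<gamma> ^ i * \<rho>) \<in> saturated_gspan G g"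
  shows "hahn_subst_pow f (\<gamma> ^ d * \<rho>) \<in> saturated_gspan G g"
proof -
  define E where "E i = gpoly_scale \<rho> (gpoly_of_poly (P i))" for i
  have E: "E i \<in> rat_gpolys" for i
    using assms(3) by (simp add: E_def gpoly_scale_in_rat_gpolys gpoly_of_poly_in_rat_gpolys)
  have "gpoly_hahn_mult (E d) (hahn_subst_pow f (\<gamma> ^ d * \<rho>)) =
      (\<lambda>j. \<Sum>i<d. gpoly_hahn_mult (- E i) (hahn_subst_pow f (\<gamma> ^ i * \<rho>)) j)"
  proof
    fix j
    have "{..d} = insert d {..<d}" by auto
    then show "gpoly_hahn_mult (E d) (hahn_subst_pow f (\<gamma> ^ d * \<rho>)) j =
        (\<Sum>i<d. gpoly_hahn_mult (- E i) (hahn_subst_pow f (\<gamma> ^ i * \<rho>)) j)"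
      using mahler_eq_scaled[OF assms(1,4), of j]
      by (simp add: E_def gpoly_hahn_mult_uminus_left sum_negf add_eq_0_iff)
  qed
  also have "\<dots> \<in> saturated_gspan G g"
    by (intro saturated_gspan_sum saturated_gspan_mult assms(5,6) rat_gpolys_uminus E) simp_all
  finally show ?thesis
    using saturated_gspan_cancel[OF E] assms(2,4) by (simp add: E_def)
qed

lemma hahn_subst_pow_in_saturated_gspan:
  fixes \<alpha> \<beta> :: real
  assumes "\<alpha> \<in> \<rat>" "\<beta> \<in> \<rat>" "\<alpha> > 0" "\<beta> > 0"
    and "mahler_eq P d1 \<alpha> f" "P d1 \<noteq> 0" "mahler_eq Q d2 \<beta> f" "Q d2 \<noteq> 0"
  shows "hahn_subst_pow f (\<alpha> ^ i * \<beta> ^ j) \<in>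
    saturated_gspan ({..<d1} \<times> {..<d2}) (\<lambda>(i, j). hahn_subst_pow f (\<alpha> ^ i * \<beta> ^ j))"
proof (induction "i + j" arbitrary: i j rule: less_induct)
  case less
  let ?S = "saturated_gspan ({..<d1} \<times> {..<d2}) (\<lambda>(i, j). hahn_subst_pow f (\<alpha> ^ i * \<beta> ^ j))"
  consider "i < d1" "j < d2" | "d1 \<le> i" | "d2 \<le> j" by linarith
  then show ?case
  proof cases
    case 1
    then show ?thesis
      using generator_in_saturated_gspan[of "{..<d1} \<times> {..<d2}" "(i, j)"
          "\<lambda>(i, j). hahn_subst_pow f (\<alpha> ^ i * \<beta> ^ j)"] by simp
  next
    case 2
    define \<rho> where "\<rho> = \<alpha> ^ (i - d1) * \<beta> ^ j"
    have F_eq: "hahn_subst_pow f (\<alpha> ^ i' * \<rho>) = hahn_subst_pow f (\<alpha> ^ (i - d1 + i') * \<beta> ^ j)"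
      for i' by (simp add: \<rho>_def power_add mult_ac)
    have "hahn_subst_pow f (\<alpha> ^ d1 * \<rho>) \<in> ?S"
    proof (rule mahler_step_saturated_gspan[OF assms(5,6)])
      show "\<rho> \<in> \<rat>" "\<rho> \<noteq> 0" using assms(1-4) by (auto simp: \<rho>_def)
      fix i' assume "i' < d1"
      then show "hahn_subst_pow f (\<alpha> ^ i' * \<rho>) \<in> ?S"
        using 2 less[of "i - d1 + i'" j] by (simp add: F_eq)
    qed simp
    then show ?thesis using 2 by (simp add: F_eq)
  next
    case 3
    define \<rho> where "\<rho> = \<alpha> ^ i * \<beta> ^ (j - d2)"
    have F_eq: "hahn_subst_pow f (\<beta> ^ j' * \<rho>) = hahn_subst_pow f (\<alpha> ^ i * \<beta> ^ (j - d2 + j'))"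
      for j' by (simp add: \<rho>_def power_add mult_ac)
    have "hahn_subst_pow f (\<beta> ^ d2 * \<rho>) \<in> ?S"
    proof (rule mahler_step_saturated_gspan[OF assms(7,8)])
      show "\<rho> \<in> \<rat>" "\<rho> \<noteq> 0" using assms(1-4) by (auto simp: \<rho>_def)
      fix j' assume "j' < d2"
      then show "hahn_subst_pow f (\<beta> ^ j' * \<rho>) \<in> ?S"
        using 3 less[of i "j - d2 + j'"] by (simp add: F_eq)
    qed simp
    then show ?thesis using 3 by (simp add: F_eq)
  qed
qed

section \<open>Supports of series satisfying a relation\<close>

definition relation_quotients :: "'i set \<Rightarrow> ('i \<Rightarrow> gpoly) \<Rightarrow> ('i \<Rightarrow> real) \<Rightarrow> real set" where
  "relation_quotients I e \<gamma> = (\<lambda>(s, s', t). (s' - s) / t) `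
     ((\<Union>k\<in>I. Poly_Mapping.keys (e k)) \<times> (\<Union>k\<in>I. Poly_Mapping.keys (e k)) \<times>
      (\<gamma> ` I \<union> (\<lambda>(k, k'). \<gamma> k - \<gamma> k') ` (I \<times> I)))"

lemma finite_relation_quotients: "finite I \<Longrightarrow> finite (relation_quotients I e \<gamma>)"
  unfolding relation_quotients_def by auto

lemma relation_quotients_subset_Rats:
  assumes "\<forall>k\<in>I. e k \<in> rat_gpolys" "\<forall>k\<in>I. \<gamma> k \<in> \<rat>"
  shows "relation_quotients I e \<gamma> \<subseteq> \<rat>"
  using assms unfolding relation_quotients_def rat_gpolys_def
  by (auto intro!: Rats_divide Rats_diff)

lemma mem_closed_set_of_exponent_eq:
  assumes Y_add: "\<And>u v. u \<in> Y \<Longrightarrow> v \<in> Y \<Longrightarrow> u + v \<in> Y"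
    and Y_ratio: "\<And>k k' u. k \<in> I \<Longrightarrow> k' \<in> I \<Longrightarrow> u \<in> Y \<Longrightarrow> \<gamma> k' / \<gamma> k * u \<in> Y"
    and "relation_quotients I e \<gamma> \<subseteq> Y" "\<gamma> k > 0"
    and "k \<in> I" "k' \<in> I" "s \<in> Poly_Mapping.keys (e k)" "s' \<in> Poly_Mapping.keys (e k')"
    and "u' \<in> Y" "s + \<gamma> k * u = s' + \<gamma> k' * u'"
  shows "u \<in> Y"
proof -
  have "(s' - s) / \<gamma> k \<in> relation_quotients I e \<gamma>"
    unfolding relation_quotients_def using assms(5-8)
    by (intro image_eqI[of _ _ "(s, s', \<gamma> k)"]) auto
  moreover have "u = ((s' - s) + \<gamma> k' * u') / \<gamma> k"
    using assms(4,10) by (simp add: eq_divide_eq algebra_simps)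
  then have "u = (s' - s) / \<gamma> k + \<gamma> k' / \<gamma> k * u'"
    by (simp add: add_divide_distrib)
  ultimately show ?thesis
    using Y_add[OF subsetD[OF assms(3)] Y_ratio[OF assms(5,6,9)]] by simp
qed

lemma relation_quotients_mem_of_exponent_eq:
  assumes "k \<in> I" "k' \<in> I" "\<gamma> k \<noteq> \<gamma> k'"
    and "s \<in> Poly_Mapping.keys (e k)" "s' \<in> Poly_Mapping.keys (e k')"
    and "s + \<gamma> k * \<mu> = s' + \<gamma> k' * \<mu>"
  shows "\<mu> \<in> relation_quotients I e \<gamma>"
proof -
  have "\<mu> = (s' - s) / (\<gamma> k - \<gamma> k')"
    using assms(3,6) by (simp add: field_simps)
  also have "\<dots> \<in> relation_quotients I e \<gamma>"
    unfolding relation_quotients_def using assms(1,2,4,5)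
    by (intro image_eqI[of _ _ "(s, s', \<gamma> k - \<gamma> k')"]) auto
  finally show ?thesis .
qed

lemma sum_gpoly_hahn_mult_single_term:
  assumes "finite I" "k0 \<in> I" "s0 \<in> Poly_Mapping.keys (e k0)"
    and "\<And>k s. k \<in> I \<Longrightarrow> s \<in> Poly_Mapping.keys (e k) \<Longrightarrow> f ((m - s) / \<gamma> k) \<noteq> 0 \<Longrightarrow>
      k = k0 \<and> s = s0"
  shows "(\<Sum>k\<in>I. gpoly_hahn_mult (e k) (hahn_subst_pow f (\<gamma> k)) m) =
    Poly_Mapping.lookup (e k0) s0 * f ((m - s0) / \<gamma> k0)"
proof -
  define t where "t k s = Poly_Mapping.lookup (e k) s * f ((m - s) / \<gamma> k)" for k s
  have t0: "t k s = 0" if "k \<in> I" "s \<in> Poly_Mapping.keys (e k)" "(k, s) \<noteq> (k0, s0)" for k s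
    using assms(4)[OF that(1,2)] that(3) by (auto simp: t_def)
  have "(\<Sum>k\<in>I. gpoly_hahn_mult (e k) (hahn_subst_pow f (\<gamma> k)) m) =
      (\<Sum>k\<in>I. \<Sum>s\<in>Poly_Mapping.keys (e k). t k s)"
    by (simp add: gpoly_hahn_mult_def hahn_subst_pow_def t_def)
  also have "\<dots> = (\<Sum>(k, s)\<in>Sigma I (\<lambda>k. Poly_Mapping.keys (e k)). t k s)"
    using assms(1) by (simp add: sum.Sigma)
  also have "\<dots> = (\<Sum>(k, s)\<in>{(k0, s0)}. t k s)"
    using assms(1-3) t0 by (intro sum.mono_neutral_right) auto
  finally show ?thesis by (simp add: t_def)
qed

lemma hahn_support_subset_of_relation:
  fixes e :: "'i \<Rightarrow> gpoly" and \<gamma> :: "'i \<Rightarrow> real" and Y :: "real set"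
  assumes "finite I" "inj_on \<gamma> I" "\<forall>k\<in>I. \<gamma> k > 0" "\<exists>k\<in>I. e k \<noteq> 0"
    and rel: "\<And>j. (\<Sum>k\<in>I. gpoly_hahn_mult (e k) (hahn_subst_pow f (\<gamma> k)) j) = 0"
    and wo: "\<And>S. S \<subseteq> hahn_support f \<Longrightarrow> S \<noteq> {} \<Longrightarrow> \<exists>m\<in>S. \<forall>x\<in>S. m \<le> x"
    and Y_add: "\<And>u v. u \<in> Y \<Longrightarrow> v \<in> Y \<Longrightarrow> u + v \<in> Y"
    and Y_ratio: "\<And>k k' u. k \<in> I \<Longrightarrow> k' \<in> I \<Longrightarrow> u \<in> Y \<Longrightarrow> \<gamma> k' / \<gamma> k * u \<in> Y"
    and Y_quotients: "relation_quotients I e \<gamma> \<subseteq> Y"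
  shows "hahn_support f \<subseteq> Y"
proof (rule ccontr)
  assume "\<not> hahn_support f \<subseteq> Y"
  then obtain \<mu> where \<mu>: "f \<mu> \<noteq> 0" "\<mu> \<notin> Y" and \<mu>_least: "\<And>u. f u \<noteq> 0 \<Longrightarrow> u \<notin> Y \<Longrightarrow> \<mu> \<le> u"
    using wo[of "hahn_support f - Y"] by (auto simp: hahn_support_def)
  define I' where "I' = {k\<in>I. e k \<noteq> 0}"
  define g where "g k = gpoly_ord (e k) + \<gamma> k * \<mu>" for k
  have I': "finite I'" "I' \<noteq> {}" "I' \<subseteq> I"
    using assms(1,4) by (auto simp: I'_def)
  have ord_in: "gpoly_ord (e k) \<in> Poly_Mapping.keys (e k)" if "k \<in> I'" for k
    using that gpoly_ord_in_keys by (auto simp: I'_def)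
  have "Min (g ` I') \<in> g ` I'"
    using I'(1,2) by (intro Min_in) auto
  then obtain ks where ks: "ks \<in> I'" "g ks = Min (g ` I')"
    by (metis imageE)
  have ks_min: "g ks \<le> g k" if "k \<in> I'" for k
    using ks(2) I'(1) that by simp
  have ks_pos: "\<gamma> ks > 0" and ks_I: "ks \<in> I"
    using assms(3) ks(1) I'(3) by auto
  have no_tie: "k = ks" if "k \<in> I'" "g k = g ks" for k
  proof (rule ccontr)
    assume "k \<noteq> ks"
    then have "\<gamma> k \<noteq> \<gamma> ks" using assms(2) ks_I that(1) I'(3) by (auto dest: inj_onD)
    then have "\<mu> \<in> relation_quotients I e \<gamma>"
      using relation_quotients_mem_of_exponent_eq[OF _ ks_I _ ord_in[OF that(1)] ord_in[OF ks(1)]]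
        that I'(3) by (auto simp: g_def)
    then show False using Y_quotients \<mu>(2) by blast
  qed
  have unique: "k = ks \<and> s = gpoly_ord (e ks)"
    if "k \<in> I" "s \<in> Poly_Mapping.keys (e k)" "f ((g ks - s) / \<gamma> k) \<noteq> 0" for k s
  proof -
    define u where "u = (g ks - s) / \<gamma> k"
    have "\<gamma> k > 0" using assms(3) that(1) by blast
    then have exp_eq: "gpoly_ord (e ks) + \<gamma> ks * \<mu> = s + \<gamma> k * u"
      by (simp add: u_def g_def)
    have "u \<notin> Y"
    proof
      assume "u \<in> Y"
      then show False
        using mem_closed_set_of_exponent_eq[OF Y_add Y_ratio Y_quotients ks_pos ks_I that(1)
            ord_in[OF ks(1)] that(2) _ exp_eq] \<mu>(2) by blast
    qed
    then have "\<mu> \<le> u" using \<mu>_least that(3) by (simp add: u_def)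
    then have "\<gamma> k * \<mu> \<le> \<gamma> k * u" using \<open>\<gamma> k > 0\<close> by simp
    moreover have "k \<in> I'" using that(1,2) by (auto simp: I'_def)
    ultimately have "g k = g ks" and "k = ks"
      using ks_min gpoly_ord_le[OF that(2)] exp_eq no_tie by (force simp: g_def)+
    then show ?thesis
      using exp_eq gpoly_ord_le[OF that(2)] \<open>\<gamma> k * \<mu> \<le> \<gamma> k * u\<close> by (simp add: g_def)
  qed
  have "(\<Sum>k\<in>I. gpoly_hahn_mult (e k) (hahn_subst_pow f (\<gamma> k)) (g ks)) =
      Poly_Mapping.lookup (e ks) (gpoly_ord (e ks)) * f ((g ks - gpoly_ord (e ks)) / \<gamma> ks)"
    using ks_I ord_in[OF ks(1)] unique by (intro sum_gpoly_hahn_mult_single_term assms(1))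
  also have "\<dots> = Poly_Mapping.lookup (e ks) (gpoly_ord (e ks)) * f \<mu>"
    using ks_pos by (simp add: g_def)
  finally show False
    using rel \<mu>(1) ord_in[OF ks(1)] by (simp add: in_keys_iff)
qed

section \<open>Denominators of rational exponents\<close>

definition denom_dvd_pow :: "int \<Rightarrow> int \<Rightarrow> real set" where
  "denom_dvd_pow M N = {u. \<exists>k. u * of_int M * of_int N ^ k \<in> \<int>}"

lemma denom_dvd_pow_add:
  assumes "u \<in> denom_dvd_pow M N" "v \<in> denom_dvd_pow M N"
  shows "u + v \<in> denom_dvd_pow M N"
proof -
  obtain k1 where k1: "u * of_int M * of_int N ^ k1 \<in> \<int>"
    using assms(1) by (auto simp: denom_dvd_pow_def)
  obtain k2 where k2: "v * of_int M * of_int N ^ k2 \<in> \<int>"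
    using assms(2) by (auto simp: denom_dvd_pow_def)
  have "(u + v) * of_int M * of_int N ^ (k1 + k2) = (u * of_int M * of_int N ^ k1) * of_int N ^ k2
      + (v * of_int M * of_int N ^ k2) * of_int N ^ k1"
    by (simp add: algebra_simps power_add)
  also have "\<dots> \<in> \<int>"
    using k1 k2 by (metis Ints_add Ints_mult Ints_of_int Ints_power)
  finally show ?thesis unfolding denom_dvd_pow_def by blast
qed

lemma denom_dvd_pow_mult:
  assumes "q * of_int N ^ k \<in> \<int>" "u \<in> denom_dvd_pow M N"
  shows "q * u \<in> denom_dvd_pow M N"
proof -
  obtain k' where k': "u * of_int M * of_int N ^ k' \<in> \<int>"
    using assms(2) by (auto simp: denom_dvd_pow_def)
  have "q * u * of_int M * of_int N ^ (k + k') =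
      (q * of_int N ^ k) * (u * of_int M * of_int N ^ k')"
    by (simp add: algebra_simps power_add)
  also have "\<dots> \<in> \<int>"
    using assms(1) k' by (rule Ints_mult)
  finally show ?thesis unfolding denom_dvd_pow_def by blast
qed

lemma Rats_common_denom:
  assumes "finite A" "A \<subseteq> \<rat>"
  shows "\<exists>L::int. L > 0 \<and> (\<forall>q\<in>A. q * of_int L \<in> \<int>)"
  using assms
proof (induction A rule: finite_induct)
  case (insert x A)
  then obtain L where L: "L > 0" "\<forall>q\<in>A. q * of_int L \<in> \<int>" by auto
  obtain a b where ab: "b > 0" "x = of_int a / of_int b"
    using insert.prems by (auto elim: Rats_cases')
  have "x * of_int (L * b) \<in> \<int>" using ab by simp
  moreover have "q * of_int (L * b) \<in> \<int>" if "q \<in> A" for q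
    using L(2) that Ints_mult[OF _ Ints_of_int[of b]] by (simp add: mult.assoc[symmetric])
  ultimately show ?case using L(1) ab(1) by (intro exI[of _ "L * b"]) auto
qed (auto intro: exI[of _ 1])

definition padic_units :: "int \<Rightarrow> real set" where
  "padic_units p = {r. \<exists>x y. \<not> p dvd x \<and> \<not> p dvd y \<and> r = of_int x / of_int y}"

lemma one_in_padic_units: "prime p \<Longrightarrow> 1 \<in> padic_units p"
  unfolding padic_units_def using not_prime_unit[of p] by (intro CollectI exI[of _ 1]) auto

lemma padic_units_mult:
  assumes "prime p" "r \<in> padic_units p" "s \<in> padic_units p"
  shows "r * s \<in> padic_units p"
proof -
  obtain x y where xy: "\<not> p dvd x" "\<not> p dvd y" "r = of_int x / of_int y"
    using assms(2) by (auto simp: padic_units_def)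
  obtain x' y' where xy': "\<not> p dvd x'" "\<not> p dvd y'" "s = of_int x' / of_int y'"
    using assms(3) by (auto simp: padic_units_def)
  have "\<not> p dvd x * x'" "\<not> p dvd y * y'"
    using xy xy' assms(1) by (auto simp: prime_dvd_mult_iff)
  moreover have "r * s = of_int (x * x') / of_int (y * y')"
    using xy xy' by simp
  ultimately show ?thesis unfolding padic_units_def by blast
qed

lemma padic_units_inverse:
  assumes "r \<in> padic_units p"
  shows "inverse r \<in> padic_units p"
proof -
  obtain x y where "\<not> p dvd x" "\<not> p dvd y" "r = of_int x / of_int y"
    using assms by (auto simp: padic_units_def)
  then show ?thesis unfolding padic_units_def by (intro CollectI exI[of _ y] exI[of _ x]) simp
qed

lemma padic_units_power: "prime p \<Longrightarrow> r \<in> padic_units p \<Longrightarrow> r ^ n \<in> padic_units p"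
  by (induction n) (auto intro: one_in_padic_units padic_units_mult)

lemma padic_units_powi: "prime p \<Longrightarrow> r \<in> padic_units p \<Longrightarrow> r powi n \<in> padic_units p"
  by (cases "n \<ge> 0") (auto simp: power_int_def intro!: padic_units_power padic_units_inverse)

lemma Rats_eq_prime_powi_mult_padic_unit:
  assumes "prime p" "q \<in> \<rat>" "q > 0"
  obtains e \<rho> where "\<rho> \<in> padic_units p" "q = (of_int p :: real) powi e * \<rho>"
proof -
  obtain a b where ab: "b > 0" "q = of_int a / of_int b"
    using assms(2) by (auto elim: Rats_cases')
  then have "a \<noteq> 0" "b \<noteq> 0" using assms(3) by auto
  obtain a0 where a0: "a = p ^ multiplicity p a * a0" "\<not> p dvd a0"
    using multiplicity_decompose'[of a p] \<open>a \<noteq> 0\<close> assms(1) not_prime_unit by blast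
  obtain b0 where b0: "b = p ^ multiplicity p b * b0" "\<not> p dvd b0"
    using multiplicity_decompose'[of b p] \<open>b \<noteq> 0\<close> assms(1) not_prime_unit by blast
  define ea eb where "ea = multiplicity p a" and "eb = multiplicity p b"
  have "(of_int a :: real) = of_int p ^ ea * of_int a0"
    and "(of_int b :: real) = of_int p ^ eb * of_int b0"
    using a0(1) b0(1) unfolding ea_def eb_def by (metis of_int_mult of_int_power)+
  moreover have "(of_int p :: real) \<noteq> 0" using assms(1) by auto
  ultimately have "q = of_int p powi (int ea - int eb) * (of_int a0 / of_int b0)"
    using ab(2) by (simp add: power_int_diff)
  moreover have "of_int a0 / of_int b0 \<in> padic_units p"
    using a0(2) b0(2) unfolding padic_units_def by blast
  ultimately show ?thesis using that by blast
qed

definition denom_p_part_dvd :: "int \<Rightarrow> nat \<Rightarrow> real set" where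
  "denom_p_part_dvd p n = {u. \<exists>m. \<not> p dvd m \<and> u * of_int m * of_int p ^ n \<in> \<int>}"

lemma denom_p_part_dvd_add:
  assumes "prime p" "u \<in> denom_p_part_dvd p n" "v \<in> denom_p_part_dvd p n"
  shows "u + v \<in> denom_p_part_dvd p n"
proof -
  obtain m1 where m1: "\<not> p dvd m1" "u * of_int m1 * of_int p ^ n \<in> \<int>"
    using assms(2) by (auto simp: denom_p_part_dvd_def)
  obtain m2 where m2: "\<not> p dvd m2" "v * of_int m2 * of_int p ^ n \<in> \<int>"
    using assms(3) by (auto simp: denom_p_part_dvd_def)
  have "(u + v) * of_int (m1 * m2) * of_int p ^ n =
      (u * of_int m1 * of_int p ^ n) * of_int m2 + (v * of_int m2 * of_int p ^ n) * of_int m1"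
    by (simp add: algebra_simps)
  also have "\<dots> \<in> \<int>"
    by (intro Ints_add Ints_mult[OF m1(2)] Ints_mult[OF m2(2)] Ints_of_int)
  finally have "(u + v) * of_int (m1 * m2) * of_int p ^ n \<in> \<int>" .
  moreover have "\<not> p dvd m1 * m2"
    using m1 m2 assms(1) by (simp add: prime_dvd_mult_iff)
  ultimately show ?thesis
    unfolding denom_p_part_dvd_def by blast
qed

lemma padic_units_mult_denom_p_part_dvd:
  assumes "prime p" "r \<in> padic_units p" "u \<in> denom_p_part_dvd p n"
  shows "r * u \<in> denom_p_part_dvd p n"
proof -
  obtain x y where xy: "\<not> p dvd x" "\<not> p dvd y" "r = of_int x / of_int y"
    using assms(2) by (auto simp: padic_units_def)
  obtain m where m: "\<not> p dvd m" "u * of_int m * of_int p ^ n \<in> \<int>"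
    using assms(3) by (auto simp: denom_p_part_dvd_def)
  have "y \<noteq> 0" using xy(2) by auto
  then have "r * u * of_int (m * y) * of_int p ^ n = of_int x * (u * of_int m * of_int p ^ n)"
    using xy(3) by (simp add: field_simps)
  also have "\<dots> \<in> \<int>"
    by (intro Ints_mult[OF Ints_of_int m(2)])
  finally have "r * u * of_int (m * y) * of_int p ^ n \<in> \<int>" .
  moreover have "\<not> p dvd m * y"
    using m(1) xy(2) assms(1) by (simp add: prime_dvd_mult_iff)
  ultimately show ?thesis
    unfolding denom_p_part_dvd_def by blast
qed

lemma denom_p_part_dvd_mono:
  assumes "n \<le> n'" "u \<in> denom_p_part_dvd p n"
  shows "u \<in> denom_p_part_dvd p n'"
proof -
  obtain m where m: "\<not> p dvd m" "u * of_int m * of_int p ^ n \<in> \<int>"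
    using assms(2) by (auto simp: denom_p_part_dvd_def)
  have "u * of_int m * of_int p ^ n' = (u * of_int m * of_int p ^ n) * of_int p ^ (n' - n)"
    using assms(1) by (simp flip: power_add)
  also have "\<dots> \<in> \<int>"
    by (intro Ints_mult[OF m(2)] Ints_power Ints_of_int)
  finally show ?thesis using m(1) unfolding denom_p_part_dvd_def by blast
qed

lemma denom_p_part_dvd_multiplicity:
  assumes "prime p" "L \<noteq> 0" "q * of_int L \<in> \<int>"
  shows "q \<in> denom_p_part_dvd p (multiplicity p L)"
proof -
  obtain m where m: "L = p ^ multiplicity p L * m" "\<not> p dvd m"
    using multiplicity_decompose'[of L p] assms(1,2) not_prime_unit by blast
  have "(of_int L :: real) = of_int p ^ multiplicity p L * of_int m"
    by (subst m(1)) simp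
  then have "q * of_int m * of_int p ^ multiplicity p L = q * of_int L"
    by (simp add: mult_ac)
  with assms(3) have "q * of_int m * of_int p ^ multiplicity p L \<in> \<int>"
    by (simp only:)
  then show ?thesis
    using m(2) unfolding denom_p_part_dvd_def by blast
qed

lemma Ints_of_local_denominators:
  fixes w :: real and D :: int
  assumes "D \<noteq> 0" "w * of_int D \<in> \<int>"
    and "\<And>p. prime p \<Longrightarrow> p dvd D \<Longrightarrow> \<exists>m. \<not> p dvd m \<and> w * of_int m \<in> \<int>"
  shows "w \<in> \<int>"
  using assms
proof (induction "nat \<bar>D\<bar>" arbitrary: D rule: less_induct)
  case less
  show ?case
  proof (cases "is_unit D")
    case True
    then have "D = 1 \<or> D = - 1" by (auto simp: zdvd1_eq abs_if split: if_splits)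
    then show ?thesis using less.prems(2) by auto
  next
    case False
    then obtain p where p: "prime p" "p dvd D"
      using prime_divisor_exists less.prems(1) by blast
    then obtain m where m: "\<not> p dvd m" "w * of_int m \<in> \<int>"
      using less.prems(3) by blast
    define D' where "D' = D div p"
    have D_eq: "D = p * D'" using p(2) by (simp add: D'_def)
    \<comment> \<open>Bezout: the denominators \<open>D\<close> and \<open>m\<close> combine to \<open>gcd D m\<close>, which has no factor \<open>p\<close>\<close>
    obtain s t where st: "s * D + t * m = gcd D m"
      using bezout_int by blast
    have "w * of_int (gcd D m) = of_int s * (w * of_int D) + of_int t * (w * of_int m)"
      by (simp flip: st add: algebra_simps)
    then have w_gcd: "w * of_int (gcd D m) \<in> \<int>"
      using less.prems(2) m(2) by (simp add: Ints_add Ints_mult)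
    have "coprime p (gcd D m)"
      using p(1) m(1) by (simp add: prime_imp_coprime)
    then have "gcd D m dvd D'"
      using D_eq by (metis coprime_commute coprime_dvd_mult_right_iff gcd_dvd1)
    then obtain r where "D' = gcd D m * r" by (elim dvdE)
    then have "w * of_int D' = (w * of_int (gcd D m)) * of_int r" by simp
    with w_gcd have "w * of_int D' \<in> \<int>" by (metis Ints_mult Ints_of_int)
    moreover have "D' \<noteq> 0" "nat \<bar>D'\<bar> < nat \<bar>D\<bar>"
      using D_eq less.prems(1) prime_gt_1_int[OF p(1)] by (auto simp: abs_mult)
    moreover have "\<exists>m. \<not> q dvd m \<and> w * of_int m \<in> \<int>" if "prime q" "q dvd D'" for q
      using less.prems(3) that D_eq by auto
    ultimately show ?thesis using less.hyps by blast
  qed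
qed

lemma Ints_mult_of_denominators:
  assumes "N \<noteq> 0" "u \<in> denom_dvd_pow M N"
    and "\<And>p. prime p \<Longrightarrow> p dvd N \<Longrightarrow> u \<in> denom_p_part_dvd p n"
  shows "u * of_int M * of_int N ^ n \<in> \<int>"
proof -
  obtain k where k: "u * of_int M * of_int N ^ k \<in> \<int>"
    using assms(2) by (auto simp: denom_dvd_pow_def)
  show ?thesis
  proof (rule Ints_of_local_denominators)
    show "N ^ k \<noteq> 0" using assms(1) by simp
    have "u * of_int M * of_int N ^ n * of_int (N ^ k) =
        (u * of_int M * of_int N ^ k) * of_int (N ^ n)"
      by (simp add: mult_ac)
    then show "u * of_int M * of_int N ^ n * of_int (N ^ k) \<in> \<int>"
      using k by (metis Ints_mult Ints_of_int)
  next
    fix p assume p: "prime p" "p dvd N ^ k"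
    then have "p dvd N" using prime_dvd_power by blast
    then obtain N' where N': "N = p * N'" by (elim dvdE)
    obtain m where m: "\<not> p dvd m" "u * of_int m * of_int p ^ n \<in> \<int>"
      using assms(3)[OF p(1) \<open>p dvd N\<close>] by (auto simp: denom_p_part_dvd_def)
    have "u * of_int M * of_int N ^ n * of_int m =
        (u * of_int m * of_int p ^ n) * of_int (M * N' ^ n)"
      by (simp add: N' power_mult_distrib)
    with m show "\<exists>m. \<not> p dvd m \<and> u * of_int M * of_int N ^ n * of_int m \<in> \<int>"
      by (metis Ints_mult Ints_of_int)
  qed
qed

section \<open>The two Mahler equations\<close>

lemma ln_powi: "(a::real) > 0 \<Longrightarrow> ln (a powi n) = of_int n * ln a"
  by (cases "n \<ge> 0") (auto simp: power_int_def ln_realpow ln_inverse)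

lemma mult_indep_ln_combination_ne_0:
  assumes "mult_indep \<alpha> \<beta>" "x \<noteq> 0 \<or> y \<noteq> 0"
  shows "of_int x * ln \<alpha> + of_int y * ln \<beta> \<noteq> 0"
proof
  assume h: "of_int x * ln \<alpha> + of_int y * ln \<beta> = 0"
  have nq: "ln \<alpha> / ln \<beta> \<notin> \<rat>" using assms(1) by (simp add: mult_indep_def)
  then have "ln \<beta> \<noteq> 0" by auto
  show False
  proof (cases "x = 0")
    case True
    then show False using h assms(2) \<open>ln \<beta> \<noteq> 0\<close> by simp
  next
    case False
    with h \<open>ln \<beta> \<noteq> 0\<close> have "ln \<alpha> / ln \<beta> = - (of_int y / of_int x)"
      by (simp add: field_simps)
    then show False using nq by simp
  qed
qed

lemma power_nat_eq_powi_mult_power: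
  fixes r :: real and z :: int
  assumes "k \<le> n" "r \<noteq> 0"
  shows "r ^ nat (int n * \<bar>z\<bar> + int k * z) = r powi (int n * \<bar>z\<bar>) * (r powi z) ^ k"
proof -
  have "\<bar>int k * z\<bar> \<le> int n * \<bar>z\<bar>"
    using assms(1) by (simp add: abs_mult mult_right_mono)
  then have "r ^ nat (int n * \<bar>z\<bar> + int k * z) = r powi (int n * \<bar>z\<bar> + int k * z)"
    by (simp flip: power_int_of_nat)
  also have "\<dots> = r powi (int n * \<bar>z\<bar>) * (r powi z) ^ k"
    using assms(2) by (simp add: power_int_add power_int_mult mult.commute)
  finally show ?thesis .
qed

lemma hahn_support_denom_dvd_pow:
  fixes a b :: int
  assumes "a > 0" "b > 0" "\<alpha> = of_int a / of_int b" "\<alpha> \<noteq> 1"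
    and "mahler_eq P d \<alpha> f" "P d \<noteq> 0"
    and wo: "\<And>S. S \<subseteq> hahn_support f \<Longrightarrow> S \<noteq> {} \<Longrightarrow> \<exists>m\<in>S. \<forall>x\<in>S. m \<le> x"
  shows "\<exists>L>0. hahn_support f \<subseteq> denom_dvd_pow L (a * b)"
proof -
  define e where "e i = gpoly_of_poly (P i)" for i
  have \<alpha>: "\<alpha> > 0" "\<alpha> \<in> \<rat>" using assms(1-3) by auto
  have "relation_quotients {..d} e (\<lambda>k. \<alpha> ^ k) \<subseteq> \<rat>"
    using \<alpha>(2) by (intro relation_quotients_subset_Rats)
      (auto simp: e_def gpoly_of_poly_in_rat_gpolys)
  then obtain L where L: "L > 0" "\<forall>q\<in>relation_quotients {..d} e (\<lambda>k. \<alpha> ^ k). q * of_int L \<in> \<int>"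
    using Rats_common_denom[OF finite_relation_quotients] by blast
  have "hahn_support f \<subseteq> denom_dvd_pow L (a * b)"
  proof (rule hahn_support_subset_of_relation[OF finite_atMost _ _ _ _ wo denom_dvd_pow_add])
    show "inj_on (\<lambda>k. \<alpha> ^ k) {..d}"
      using \<alpha>(1) assms(4) by (auto simp: inj_on_def power_inject_exp')
    show "\<forall>k\<in>{..d}. \<alpha> ^ k > 0" "\<exists>k\<in>{..d}. e k \<noteq> 0"
      using \<alpha>(1) assms(6) by (auto simp: e_def)
    show "(\<Sum>k\<le>d. gpoly_hahn_mult (e k) (hahn_subst_pow f (\<alpha> ^ k)) j) = 0" for j
      using assms(5) by (simp add: e_def gpoly_hahn_mult_of_poly mahler_eq_def)
    show "\<alpha> ^ k' / \<alpha> ^ k * u \<in> denom_dvd_pow L (a * b)"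
      if "u \<in> denom_dvd_pow L (a * b)" for k k' u
    proof (rule denom_dvd_pow_mult[OF _ that])
      have "\<alpha> ^ k' / \<alpha> ^ k * of_int (a * b) ^ (k + k') = of_int (a ^ (k' + k') * b ^ (k + k))"
        using assms(1,2) unfolding assms(3)
        by (simp add: power_divide power_mult_distrib power_add field_simps)
      then show "\<alpha> ^ k' / \<alpha> ^ k * of_int (a * b) ^ (k + k') \<in> \<int>" by simp
    qed
    show "relation_quotients {..d} e (\<lambda>k. \<alpha> ^ k) \<subseteq> denom_dvd_pow L (a * b)"
      using L(2) unfolding denom_dvd_pow_def by (force intro: exI[of _ 0])
  qed
  with L(1) show ?thesis by blast
qed

lemma two_mahler_geometric_relation:
  fixes \<alpha> \<beta> :: real and x y :: int
  assumes "\<alpha> \<in> \<rat>" "\<beta> \<in> \<rat>" "\<alpha> > 0" "\<beta> > 0"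
    and "mahler_eq P d1 \<alpha> f" "P d1 \<noteq> 0" "mahler_eq Q d2 \<beta> f" "Q d2 \<noteq> 0"
  obtains C n e where "C > 0" "C \<in> \<rat>" "\<forall>k\<in>{..n}. e k \<in> rat_gpolys" "\<exists>k\<in>{..n}. e k \<noteq> 0"
    "\<And>j. (\<Sum>k\<le>n. gpoly_hahn_mult (e k) (hahn_subst_pow f (C * (\<alpha> powi x * \<beta> powi y) ^ k)) j) = 0"
proof -
  define G where "G = {..<d1} \<times> {..<d2}"
  define n where "n = card G"
  define C where "C = \<alpha> powi (int n * \<bar>x\<bar>) * \<beta> powi (int n * \<bar>y\<bar>)"
  have in_span: "hahn_subst_pow f (C * (\<alpha> powi x * \<beta> powi y) ^ k) \<in>
      saturated_gspan G (\<lambda>(i, j). hahn_subst_pow f (\<alpha> ^ i * \<beta> ^ j))" if "k \<in> {..n}" for k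
  proof -
    have k: "k \<le> n" and "\<alpha> \<noteq> 0" "\<beta> \<noteq> 0" using that assms(3,4) by auto
    then have "\<alpha> ^ nat (int n * \<bar>x\<bar> + int k * x) * \<beta> ^ nat (int n * \<bar>y\<bar> + int k * y) =
        \<alpha> powi (int n * \<bar>x\<bar>) * (\<alpha> powi x) ^ k * (\<beta> powi (int n * \<bar>y\<bar>) * (\<beta> powi y) ^ k)"
      by (simp only: power_nat_eq_powi_mult_power[OF k \<open>\<alpha> \<noteq> 0\<close>]
          power_nat_eq_powi_mult_power[OF k \<open>\<beta> \<noteq> 0\<close>])
    also have "\<dots> = C * (\<alpha> powi x * \<beta> powi y) ^ k"
      by (simp add: C_def power_mult_distrib mult_ac)
    finally have "C * (\<alpha> powi x * \<beta> powi y) ^ k =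
        \<alpha> ^ nat (int n * \<bar>x\<bar> + int k * x) * \<beta> ^ nat (int n * \<bar>y\<bar> + int k * y)" ..
    then show ?thesis
      using hahn_subst_pow_in_saturated_gspan[OF assms] by (simp add: G_def)
  qed
  have "\<exists>e. (\<forall>k\<in>{..n}. e k \<in> rat_gpolys) \<and> (\<exists>k\<in>{..n}. e k \<noteq> 0) \<and>
      (\<forall>j. (\<Sum>k\<le>n. gpoly_hahn_mult (e k) (hahn_subst_pow f (C * (\<alpha> powi x * \<beta> powi y) ^ k)) j) = 0)"
    by (rule saturated_gspan_relation[of G]) (use in_span in \<open>simp_all add: G_def n_def\<close>)
  then obtain e where "\<forall>k\<in>{..n}. e k \<in> rat_gpolys" "\<exists>k\<in>{..n}. e k \<noteq> 0"
      "\<forall>j. (\<Sum>k\<le>n. gpoly_hahn_mult (e k) (hahn_subst_pow f (C * (\<alpha> powi x * \<beta> powi y) ^ k)) j) = 0"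
    by blast
  moreover have "C > 0" "C \<in> \<rat>"
    using assms(1-4) by (auto simp: C_def power_int_def)
  ultimately show thesis using that by blast
qed

lemma exists_padic_unit_powi:
  fixes \<alpha> \<beta> :: real
  assumes "prime p" "\<alpha> \<in> \<rat>" "\<beta> \<in> \<rat>" "\<alpha> > 0" "\<beta> > 0" "mult_indep \<alpha> \<beta>"
  obtains x y where "\<alpha> powi x * \<beta> powi y \<in> padic_units p" "\<alpha> powi x * \<beta> powi y \<noteq> 1"
proof -
  obtain eA \<rho>A where A: "\<rho>A \<in> padic_units p" "\<alpha> = of_int p powi eA * \<rho>A"
    using Rats_eq_prime_powi_mult_padic_unit[OF assms(1,2,4)] by blast
  obtain eB \<rho>B where B: "\<rho>B \<in> padic_units p" "\<beta> = of_int p powi eB * \<rho>B"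
    using Rats_eq_prime_powi_mult_padic_unit[OF assms(1,3,5)] by blast
  \<comment> \<open>choose \<open>(x, y) \<noteq> (0, 0)\<close> with \<open>eA x + eB y = 0\<close>, so that the powers of \<open>p\<close> cancel\<close>
  define x where "x = (if eA = 0 then 1 else eB)"
  define y where "y = (if eA = 0 then 0 else - eA)"
  have "(of_int p :: real) \<noteq> 0" using assms(1) by auto
  then have "\<alpha> powi x * \<beta> powi y = of_int p powi (eA * x + eB * y) * (\<rho>A powi x * \<rho>B powi y)"
    by (simp add: A(2) B(2) power_int_mult_distrib power_int_add power_int_mult mult_ac)
  also have "eA * x + eB * y = 0" by (simp add: x_def y_def)
  finally have "\<alpha> powi x * \<beta> powi y = \<rho>A powi x * \<rho>B powi y" by simp
  moreover have "\<rho>A powi x * \<rho>B powi y \<in> padic_units p"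
    using A(1) B(1) assms(1) by (simp add: padic_units_mult padic_units_powi)
  ultimately have "\<alpha> powi x * \<beta> powi y \<in> padic_units p" by simp
  moreover have "ln (\<alpha> powi x * \<beta> powi y) \<noteq> 0"
    using mult_indep_ln_combination_ne_0[OF assms(6), of x y] assms(4,5)
    by (simp add: ln_mult ln_powi x_def y_def)
  ultimately show thesis using that by fastforce
qed

lemma hahn_support_denom_p_part_dvd:
  fixes \<alpha> \<beta> :: real
  assumes "prime p" "\<alpha> \<in> \<rat>" "\<beta> \<in> \<rat>" "\<alpha> > 0" "\<beta> > 0" "mult_indep \<alpha> \<beta>"
    and "mahler_eq P d1 \<alpha> f" "P d1 \<noteq> 0" "mahler_eq Q d2 \<beta> f" "Q d2 \<noteq> 0"
    and wo: "\<And>S. S \<subseteq> hahn_support f \<Longrightarrow> S \<noteq> {} \<Longrightarrow> \<exists>m\<in>S. \<forall>x\<in>S. m \<le> x"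
  shows "\<exists>n. hahn_support f \<subseteq> denom_p_part_dvd p n"
proof -
  obtain x y where xy: "\<alpha> powi x * \<beta> powi y \<in> padic_units p" "\<alpha> powi x * \<beta> powi y \<noteq> 1"
    using exists_padic_unit_powi[OF assms(1-6)] by blast
  define \<delta> where "\<delta> = \<alpha> powi x * \<beta> powi y"
  have \<delta>: "\<delta> \<in> padic_units p" "\<delta> \<noteq> 1" "\<delta> > 0"
    using xy assms(4,5) by (simp_all add: \<delta>_def)
  obtain C n e where C: "C > 0" "C \<in> \<rat>" and e: "\<forall>k\<in>{..n}. e k \<in> rat_gpolys" "\<exists>k\<in>{..n}. e k \<noteq> 0"
    and rel: "\<And>j. (\<Sum>k\<le>n. gpoly_hahn_mult (e k) (hahn_subst_pow f (C * \<delta> ^ k)) j) = 0"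
    using two_mahler_geometric_relation[OF assms(2-5,7-10)] unfolding \<delta>_def by blast
  have "\<delta> \<in> \<rat>" using assms(2,3) by (simp add: \<delta>_def power_int_def)
  then have "relation_quotients {..n} e (\<lambda>k. C * \<delta> ^ k) \<subseteq> \<rat>"
    using C(2) e(1) by (intro relation_quotients_subset_Rats) auto
  then obtain L where L: "L > 0" "\<forall>q\<in>relation_quotients {..n} e (\<lambda>k. C * \<delta> ^ k). q * of_int L \<in> \<int>"
    using Rats_common_denom[OF finite_relation_quotients] by blast
  let ?Y = "denom_p_part_dvd p (multiplicity p L)"
  have "hahn_support f \<subseteq> ?Y"
  proof (rule hahn_support_subset_of_relation[OF finite_atMost _ _ e(2) rel wo])
    show "inj_on (\<lambda>k. C * \<delta> ^ k) {..n}"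
      using C(1) \<delta>(2,3) by (auto simp: inj_on_def power_inject_exp')
    show "\<forall>k\<in>{..n}. C * \<delta> ^ k > 0" using C(1) \<delta>(3) by simp
    show "u + v \<in> ?Y" if "u \<in> ?Y" "v \<in> ?Y" for u v
      using denom_p_part_dvd_add[OF assms(1) that] .
    show "C * \<delta> ^ k' / (C * \<delta> ^ k) * u \<in> ?Y" if "u \<in> ?Y" for k k' u
    proof -
      have "C * \<delta> ^ k' / (C * \<delta> ^ k) = \<delta> ^ k' * inverse (\<delta> ^ k)"
        using C(1) \<delta>(3) by (simp add: field_simps)
      moreover have "\<delta> ^ k' * inverse (\<delta> ^ k) \<in> padic_units p"
        by (intro padic_units_mult padic_units_power padic_units_inverse \<delta>(1) assms(1))
      ultimately show ?thesis
        using padic_units_mult_denom_p_part_dvd[OF assms(1) _ that] by simp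
    qed
    show "relation_quotients {..n} e (\<lambda>k. C * \<delta> ^ k) \<subseteq> ?Y"
      using L assms(1) denom_p_part_dvd_multiplicity by auto
  qed
  then show ?thesis by blast
qed

lemma hahn_support_common_denominator:
  fixes \<alpha> \<beta> :: real
  assumes "\<alpha> \<in> \<rat>" "\<beta> \<in> \<rat>" "\<alpha> > 0" "\<beta> > 0" "mult_indep \<alpha> \<beta>"
    and "mahler_eq P d1 \<alpha> f" "P d1 \<noteq> 0" "mahler_eq Q d2 \<beta> f" "Q d2 \<noteq> 0"
    and wo: "\<And>S. S \<subseteq> hahn_support f \<Longrightarrow> S \<noteq> {} \<Longrightarrow> \<exists>m\<in>S. \<forall>x\<in>S. m \<le> x"
  shows "\<exists>l::nat. l > 0 \<and> (\<forall>u\<in>hahn_support f. u * of_nat l \<in> \<int>)"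
proof -
  obtain a b where ab: "b > 0" "\<alpha> = of_int a / of_int b"
    using assms(1) by (auto elim: Rats_cases')
  with assms(3) have "a > 0" by (simp add: zero_less_divide_iff)
  have "\<alpha> \<noteq> 1"
    using mult_indep_ln_combination_ne_0[OF assms(5), of 1 0] by auto
  obtain L where L: "L > 0" "hahn_support f \<subseteq> denom_dvd_pow L (a * b)"
    using hahn_support_denom_dvd_pow[OF \<open>a > 0\<close> ab \<open>\<alpha> \<noteq> 1\<close> assms(6,7) wo] by blast
  define PF where "PF = {p. prime p \<and> p dvd a * b}"
  have "finite PF"
    using \<open>a > 0\<close> ab(1) by (auto simp: PF_def intro: finite_subset[OF _ finite_divisors_int])
  have "\<forall>p\<in>PF. \<exists>n. hahn_support f \<subseteq> denom_p_part_dvd p n"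
    using hahn_support_denom_p_part_dvd[OF _ assms(1-9) wo] by (simp add: PF_def)
  from bchoice[OF this] obtain np
    where np: "\<forall>p\<in>PF. hahn_support f \<subseteq> denom_p_part_dvd p (np p)"
    by blast
  define n where "n = (\<Sum>p\<in>PF. np p)"
  have "hahn_support f \<subseteq> denom_p_part_dvd p n" if "prime p" "p dvd a * b" for p
  proof -
    have "p \<in> PF" using that by (simp add: PF_def)
    then have "np p \<le> n"
      unfolding n_def by (intro member_le_sum \<open>finite PF\<close>) auto
    then show ?thesis
      using np \<open>p \<in> PF\<close> denom_p_part_dvd_mono by blast
  qed
  then have "u * of_int (L * (a * b) ^ n) \<in> \<int>" if "u \<in> hahn_support f" for u
    using Ints_mult_of_denominators[of "a * b" u L n] L(2) that \<open>a > 0\<close> ab(1)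
    by (auto simp: mult.assoc)
  moreover have "L * (a * b) ^ n > 0" using L(1) \<open>a > 0\<close> ab(1) by simp
  ultimately show ?thesis
    by (intro exI[of _ "nat (L * (a * b) ^ n)"]) simp
qed

lemma hahn_support_hahn_subst_pow:
  assumes "\<gamma> \<noteq> 0"
  shows "hahn_support (hahn_subst_pow f \<gamma>) = (\<lambda>u. \<gamma> * u) ` hahn_support f"
proof (intro set_eqI iffI)
  fix t assume "t \<in> hahn_support (hahn_subst_pow f \<gamma>)"
  then have "t / \<gamma> \<in> hahn_support f" "t = \<gamma> * (t / \<gamma>)"
    using assms by (auto simp: hahn_support_def hahn_subst_pow_def)
  then show "t \<in> (\<lambda>u. \<gamma> * u) ` hahn_support f" by blast
qed (use assms in \<open>auto simp: hahn_support_def hahn_subst_pow_def\<close>)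

lemma Ints_subset_Zring_gen: "\<int> \<subseteq> Zring_gen \<gamma>"
  unfolding Zring_gen_def
proof (intro subsetI InterI, clarify)
  fix t :: real and S :: "real set"
  assume t: "t \<in> \<int>" and S: "1 \<in> S" "\<forall>x\<in>S. \<forall>y\<in>S. x + y \<in> S \<and> x - y \<in> S \<and> x * y \<in> S"
  have "0 \<in> S" using S(2)[rule_format, OF S(1) S(1)] by simp
  have nat: "of_nat n \<in> S" for n
  proof (induction n)
    case (Suc n)
    then show ?case using S by (simp add: add.commute)
  qed (use \<open>0 \<in> S\<close> in simp)
  obtain z where z: "t = of_int z" using t by (auto elim: Ints_cases)
  show "t \<in> S"
  proof (cases "z \<ge> 0")
    case True
    then show ?thesis using z nat[of "nat z"] by simp
  next
    case False
    then have "t = 0 - of_nat (nat (- z))" using z by simp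
    then show ?thesis using S(2)[rule_format, OF \<open>0 \<in> S\<close> nat[of "nat (- z)"]] by simp
  qed
qed

theorem mainTheorem13:
  fixes K :: "complex set" and \<alpha> \<beta> :: real and N :: nat
    and f :: "real \<Rightarrow> complex"
    and P Q :: "nat \<Rightarrow> complex poly" and d1 d2 :: nat
  assumes "number_field K"
    and "\<alpha> \<in> \<rat>" "\<alpha> > 0" "\<beta> \<in> \<rat>" "\<beta> > 0" "mult_indep \<alpha> \<beta>"
    and "hahn_series K f"
    and "\<forall>i\<le>d1. poly_over K (P i)" "P d1 \<noteq> 0"
    and "\<forall>i\<le>d2. poly_over K (Q i)" "Q d2 \<noteq> 0"
    and "mahler_eq P d1 \<alpha> f" "mahler_eq Q d2 \<beta> f"
  shows "\<exists>l::nat. l > 0 \<and>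
    hahn_support (hahn_subst_pow f (real l)) \<subseteq>
      (\<Inter>n\<in>{-int N..int N}. \<Inter>m\<in>{-int N..int N}.
          Zring_gen (\<alpha> powi n * \<beta> powi m))"
proof -
  have wo: "\<exists>m\<in>S. \<forall>x\<in>S. m \<le> x" if "S \<subseteq> hahn_support f" "S \<noteq> {}" for S
    using assms(7) that by (simp add: hahn_series_def)
  obtain l :: nat where l: "l > 0" "\<forall>u\<in>hahn_support f. u * of_nat l \<in> \<int>"
    using hahn_support_common_denominator[OF assms(2,4,3,5,6,12,9,13,11) wo] by blast
  have "hahn_support (hahn_subst_pow f (real l)) \<subseteq> \<int>"
    using l by (auto simp: hahn_support_hahn_subst_pow mult.commute)
  then show ?thesis
    using l(1) Ints_subset_Zring_gen by blast
qed

end
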